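(* Let $\nu$ be a stochastic dynamical system on a state space $\mathcal{S}$ and let $x,y,z\in\mathcal{S}$. Then $$\tau_\nu(x\to z)\le\tau_\nu(x\to y)\cdot\tau_\nu(y\to z).$$
   Context: A stochastic dynamical system is given by transition probabilities $\nu(s_{t+1}\mid s_t)$ on a state space $\mathcal{S}$. A trajectory from $u$ to $v$ is a finite sequence of states $h=(s_1,\dots,s_n)$ with $s_1=u$, $s_n=v$; its length is $T(h)=n$ and its probability is $\nu(h)=\prod_{t=1}^{n-1}\nu(s_{t+1}\mid s_t)$. The proper time from $u$ to $v$ is $\tau_\nu(u\to v)=\min_h T(h)/\nu(h)$, the minimum over all trajectories $h$ from $u$ to $v$, and $\tau_\nu(u\to v)=\infty$ if no such trajectory exists. *)

theory Defs
  imports "HOL-Probability.Probability_Mass_Function" "HOL-Library.Extended_Nonnegative_Real"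
begin

text \<open>A stochastic dynamical system on the state space 'a is given by a transition
  kernel nu, where pmf (nu s) s' is the transition probability nu(s' | s).
  A trajectory is a nonempty list of states.\<close>

definition is_trajectory :: "'a \<Rightarrow> 'a \<Rightarrow> 'a list \<Rightarrow> bool" where
  "is_trajectory u v h \<longleftrightarrow> h \<noteq> [] \<and> hd h = u \<and> last h = v"

definition traj_prob :: "('a \<Rightarrow> 'a pmf) \<Rightarrow> 'a list \<Rightarrow> real" where
  "traj_prob nu h = (\<Prod>i<length h - 1. pmf (nu (h ! i)) (h ! Suc i))"

text \<open>Proper time: the least value of T(h)/nu(h) over trajectories from u to v,
  with value infinity when no trajectory exists (Inf of the empty set) and
  T(h)/nu(h) = infinity when nu(h) = 0.\<close>

definition proper_time :: "('a \<Rightarrow> 'a pmf) \<Rightarrow> 'a \<Rightarrow> 'a \<Rightarrow> ennreal" where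
  "proper_time nu u v =
     (INF h \<in> {h. is_trajectory u v h}. ennreal (real (length h)) / ennreal (traj_prob nu h))"

end

theory Submission
  imports Defs
begin

text \<open>Gluing a trajectory from x to y with one from y to z (sharing the state y) gives a
  trajectory from x to z whose probability is the product and whose length is
  T(h1) + T(h2) - 1 \<le> T(h1) T(h2). Hence T/\<nu> is submultiplicative under gluing, and
  taking infima gives the claim; the infima are at least 1, so no product 0 \<cdot> \<infinity>
  can occur.\<close>

lemma traj_prob_singleton [simp]: "traj_prob nu [a] = 1"
  by (simp add: traj_prob_def)

lemma traj_prob_Cons_Cons [simp]:
  "traj_prob nu (a # b # h) = pmf (nu a) b * traj_prob nu (b # h)"
  unfolding traj_prob_def by (simp only: length_Cons diff_Suc_1 prod.lessThan_Suc_shift) simp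

lemma traj_prob_nonneg: "0 \<le> traj_prob nu h"
  unfolding traj_prob_def by (simp add: prod_nonneg)

lemma traj_prob_le_1: "traj_prob nu h \<le> 1"
  unfolding traj_prob_def by (simp add: prod_le_1 pmf_le_1)

lemma traj_prob_append_tl:
  assumes "h1 \<noteq> []" "h2 \<noteq> []" "last h1 = hd h2"
  shows "traj_prob nu (h1 @ tl h2) = traj_prob nu h1 * traj_prob nu h2"
  using assms
proof (induction h1 rule: induct_list012)
  case (2 a)
  then show ?case by (cases h2) auto
qed simp_all

lemma is_trajectory_append_tl:
  assumes "is_trajectory x y h1" "is_trajectory y z h2"
  shows "is_trajectory x z (h1 @ tl h2)"
  using assms unfolding is_trajectory_def by (cases h2) (auto simp: last_append)

definition traj_cost :: "('a \<Rightarrow> 'a pmf) \<Rightarrow> 'a list \<Rightarrow> ennreal" where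
  "traj_cost nu h = ennreal (real (length h)) / ennreal (traj_prob nu h)"

lemma proper_time_eq_INF_traj_cost:
  "proper_time nu u v = (INF h \<in> {h. is_trajectory u v h}. traj_cost nu h)"
  unfolding proper_time_def traj_cost_def ..

lemma traj_cost_ge_1:
  assumes "h \<noteq> []"
  shows "1 \<le> traj_cost nu h"
proof (cases "traj_prob nu h = 0")
  case True
  then show ?thesis using assms by (simp add: traj_cost_def)
next
  case False
  then have pos: "0 < traj_prob nu h" using traj_prob_nonneg[of nu h] by simp
  have "traj_prob nu h \<le> real (length h)"
    using traj_prob_le_1[of nu h] assms by (simp add: Suc_leI order_trans)
  then show ?thesis using pos by (simp add: traj_cost_def divide_ennreal)
qed

lemma proper_time_ge_1: "1 \<le> proper_time nu u v"
  unfolding proper_time_eq_INF_traj_cost is_trajectory_def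
  by (rule INF_greatest) (auto intro: traj_cost_ge_1)

lemma ennreal_divide_le_mult_divide:
  fixes n n1 n2 p1 p2 :: real
  assumes "n \<le> n1 * n2" "0 \<le> n" "0 < n1" "0 < n2" "0 \<le> p1" "0 \<le> p2"
  shows "ennreal n / ennreal (p1 * p2) \<le> ennreal n1 / ennreal p1 * (ennreal n2 / ennreal p2)"
proof (cases "p1 = 0 \<or> p2 = 0")
  case True
  have "ennreal n1 / ennreal p1 \<noteq> 0" "ennreal n2 / ennreal p2 \<noteq> 0"
    using assms by (auto simp: ennreal_divide_eq_0_iff)
  then show ?thesis using True by auto
next
  case False
  then have "0 < p1" "0 < p2" using assms by auto
  then have "ennreal n / ennreal (p1 * p2) = ennreal (n / (p1 * p2))"
    using assms by (simp add: divide_ennreal)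
  also have "\<dots> \<le> ennreal (n1 / p1 * (n2 / p2))"
    using assms \<open>0 < p1\<close> \<open>0 < p2\<close> by (intro ennreal_leI) (simp add: divide_right_mono)
  also have "\<dots> = ennreal n1 / ennreal p1 * (ennreal n2 / ennreal p2)"
    using assms \<open>0 < p1\<close> \<open>0 < p2\<close> by (simp add: divide_ennreal ennreal_mult[symmetric])
  finally show ?thesis .
qed

lemma traj_cost_append_tl:
  assumes "h1 \<noteq> []" "h2 \<noteq> []" "last h1 = hd h2"
  shows "traj_cost nu (h1 @ tl h2) \<le> traj_cost nu h1 * traj_cost nu h2"
proof -
  have "real (length (h1 @ tl h2)) \<le> real (length h1) * real (length h2)"
    unfolding of_nat_mult[symmetric] of_nat_le_iff using assms by (cases h1; cases h2) auto
  then show ?thesis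
    unfolding traj_cost_def traj_prob_append_tl[OF assms]
    by (intro ennreal_divide_le_mult_divide) (use assms in \<open>auto simp: traj_prob_nonneg\<close>)
qed

lemma ennreal_mult_INF:
  fixes c :: ennreal
  assumes "c < top" "B \<noteq> {}"
  shows "c * (INF b \<in> B. g b) = (INF b \<in> B. c * g b)"
proof -
  have "continuous_on UNIV (\<lambda>x::ennreal. c * x)"
    using ennreal_continuous_on_cmult[OF assms(1) continuous_on_id] by simp
  then have "c * Inf (g ` B) = Inf ((\<lambda>x. c * x) ` g ` B)"
    using assms(2)
    by (intro continuous_at_Inf_mono)
       (auto simp: mono_def mult_left_mono continuous_on_eq_continuous_within
                   continuous_at_imp_continuous_at_within)
  then show ?thesis by (simp add: image_image)
qed

lemma ennreal_le_mult_INF: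
  fixes a c :: ennreal
  assumes le: "\<And>b. b \<in> B \<Longrightarrow> c \<le> a * g b" and "a \<noteq> 0" "(INF b \<in> B. g b) \<noteq> 0"
  shows "c \<le> a * (INF b \<in> B. g b)"
proof (cases "a = top \<or> B = {}")
  case True
  then show ?thesis using assms(2,3) by auto
next
  case False
  then have "a * (INF b \<in> B. g b) = (INF b \<in> B. a * g b)"
    by (intro ennreal_mult_INF) (auto simp: top.not_eq_extremum)
  then show ?thesis using le by (auto intro: INF_greatest)
qed

lemma ennreal_le_INF_mult_INF:
  fixes c :: ennreal
  assumes le: "\<And>a b. a \<in> A \<Longrightarrow> b \<in> B \<Longrightarrow> c \<le> f a * g b"
    and nz: "(INF a \<in> A. f a) \<noteq> 0" "(INF b \<in> B. g b) \<noteq> 0"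
  shows "c \<le> (INF a \<in> A. f a) * (INF b \<in> B. g b)"
proof -
  have "c \<le> (INF b \<in> B. g b) * f a" if "a \<in> A" for a
  proof -
    have "f a \<noteq> 0"
      using nz(1) INF_lower[OF that, of f] by (auto simp: bot.extremum_unique)
    then show ?thesis
      using ennreal_le_mult_INF[of B c "f a" g] le[OF that] nz(2) by (simp add: mult.commute)
  qed
  then show ?thesis
    using ennreal_le_mult_INF[of A c "INF b \<in> B. g b" f] nz by (simp add: mult.commute)
qed

theorem mainTheorem2:
  fixes nu :: "'a \<Rightarrow> 'a pmf" and x y z :: 'a
  shows "proper_time nu x z \<le> proper_time nu x y * proper_time nu y z"
  unfolding proper_time_eq_INF_traj_cost
proof (rule ennreal_le_INF_mult_INF)
  fix h1 h2
  assume "h1 \<in> {h. is_trajectory x y h}" "h2 \<in> {h. is_trajectory y z h}"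
  then have "is_trajectory x y h1" "is_trajectory y z h2" by simp_all
  then have "(INF h \<in> {h. is_trajectory x z h}. traj_cost nu h) \<le> traj_cost nu (h1 @ tl h2)"
    by (intro INF_lower) (simp add: is_trajectory_append_tl)
  also have "\<dots> \<le> traj_cost nu h1 * traj_cost nu h2"
    using \<open>is_trajectory x y h1\<close> \<open>is_trajectory y z h2\<close>
    by (intro traj_cost_append_tl) (auto simp: is_trajectory_def)
  finally show "(INF h \<in> {h. is_trajectory x z h}. traj_cost nu h)
    \<le> traj_cost nu h1 * traj_cost nu h2" .
qed (use proper_time_ge_1[of nu x y] proper_time_ge_1[of nu y z] in
      \<open>auto simp: proper_time_eq_INF_traj_cost\<close>)

end
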